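(* For any $k\in\mathbb{Z}_{>0}$ and $i\in\{1,2,3\}$, suppose $\mathrm{S}_{k,i}(x,z)=\tfrac12[x;z]^TQ_{k,i}[x;z]$ and $\mathrm{B}_{k,i}(y,z)=-\tfrac12[y;z]^T\Theta_{k,i}[y;z]$. Then $\Theta_{k,i}=\Gamma^i(Q_{k,i})$ and $Q_{k,i}=\Gamma^i(\Theta_{k,i})$.
   Context: Consider $x_{k+1}=Ax_k+Bw_k$ with $x_k\in\mathbb{R}^n$, $w_k\in\mathbb{R}^m$, running payoff $\tfrac12x^T\Phi x-\tfrac{\gamma^2}{2}|w|^2$, and one-step operator $(\mathcal{S}_1\phi)(x)=\sup_{w}\{\tfrac12x^T\Phi x-\tfrac{\gamma^2}{2}|w|^2+\phi(Ax+Bw)\}$, $\mathcal{S}_{k+1}=\mathcal{S}_1\mathcal{S}_k$. Basis functions: $\psi^1(x,z)=z^Tx$, $\psi^2(x,z)=-\tfrac12(x-z)^TM(x-z)$ ($M=M^T>0$), $\psi^3(x,z)=\delta(x-z)$ ($\delta(0)=0$, $\delta(\xi)=-\infty$ otherwise). Define $\mathrm{S}_{k,i}(x,z)=(\mathcal{S}_k\psi^i(\cdot,z))(x)$ and its max-plus dual $\mathrm{B}_{k,i}(y,z)=-\sup_{x\in\mathbb{R}^n}\{\psi^i(x,y)-\mathrm{S}_{k,i}(x,z)\}$, so that $\mathrm{S}_{k,i}(x,z)=\sup_y\{\psi^i(x,y)+\mathrm{B}_{k,i}(y,z)\}$. For a symmetric block matrix $Q=\begin{bmatrix}Q^{11}&Q^{12}\\Q^{21}&Q^{22}\end{bmatrix}\in\mathbb{R}^{2n\times2n}$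 define $\Gamma^1(Q)=\begin{bmatrix}(Q^{11})^{-1}&-(Q^{11})^{-1}Q^{12}\\-Q^{21}(Q^{11})^{-1}&Q^{21}(Q^{11})^{-1}Q^{12}-Q^{22}\end{bmatrix}$ (requires $Q^{11}>0$), $\Gamma^2(Q)=\begin{bmatrix}M(Q^{11}+M)^{-1}M-M&-M(Q^{11}+M)^{-1}Q^{12}\\-Q^{21}(Q^{11}+M)^{-1}M&Q^{21}(Q^{11}+M)^{-1}Q^{12}-Q^{22}\end{bmatrix}$ (requires $Q^{11}+M>0$), $\Gamma^3(Q)=-Q$. One has $\Gamma^i\circ\Gamma^i$ equal to the identity. *)

theory Defs
  imports "HOL-Analysis.Analysis"
begin

text \<open>Vectors in R^n are real^'n; block vectors [x;z] in R^{2n} are indexed by 'n + 'n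
  (Inl = first block, Inr = second block); 2n x 2n matrices are real^('n+'n)^('n+'n).\<close>

definition stack :: "real^'n \<Rightarrow> real^'n \<Rightarrow> real^('n + 'n)" where
  "stack x z = (\<chi> i. case i of Inl j \<Rightarrow> x $ j | Inr j \<Rightarrow> z $ j)"

definition blk11 :: "real^('n+'n)^('n+'n) \<Rightarrow> real^'n^'n" where
  "blk11 Q = (\<chi> i j. Q $ Inl i $ Inl j)"
definition blk12 :: "real^('n+'n)^('n+'n) \<Rightarrow> real^'n^'n" where
  "blk12 Q = (\<chi> i j. Q $ Inl i $ Inr j)"
definition blk21 :: "real^('n+'n)^('n+'n) \<Rightarrow> real^'n^'n" where
  "blk21 Q = (\<chi> i j. Q $ Inr i $ Inl j)"
definition blk22 :: "real^('n+'n)^('n+'n) \<Rightarrow> real^'n^'n" where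
  "blk22 Q = (\<chi> i j. Q $ Inr i $ Inr j)"

definition blockmat ::
  "real^'n^'n \<Rightarrow> real^'n^'n \<Rightarrow> real^'n^'n \<Rightarrow> real^'n^'n \<Rightarrow> real^('n+'n)^('n+'n)" where
  "blockmat P11 P12 P21 P22 = (\<chi> i j. case i of
      Inl a \<Rightarrow> (case j of Inl b \<Rightarrow> P11 $ a $ b | Inr b \<Rightarrow> P12 $ a $ b)
    | Inr a \<Rightarrow> (case j of Inl b \<Rightarrow> P21 $ a $ b | Inr b \<Rightarrow> P22 $ a $ b))"

definition pos_def_mat :: "real^'n^'n \<Rightarrow> bool" where
  "pos_def_mat P \<longleftrightarrow> transpose P = P \<and> (\<forall>x. x \<noteq> 0 \<longrightarrow> x \<bullet> (P *v x) > 0)"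

definition Gamma :: "real^'n^'n \<Rightarrow> nat \<Rightarrow> real^('n+'n)^('n+'n) \<Rightarrow> real^('n+'n)^('n+'n)" where
  "Gamma M i Q =
    (if i = 1 then
       (let Q11 = blk11 Q; Q12 = blk12 Q; Q21 = blk21 Q; Q22 = blk22 Q; R = matrix_inv Q11 in
        blockmat R (- (R ** Q12)) (- (Q21 ** R)) (Q21 ** R ** Q12 - Q22))
     else if i = 2 then
       (let Q11 = blk11 Q; Q12 = blk12 Q; Q21 = blk21 Q; Q22 = blk22 Q; R = matrix_inv (Q11 + M) in
        blockmat (M ** R ** M - M) (- (M ** R ** Q12)) (- (Q21 ** R ** M)) (Q21 ** R ** Q12 - Q22))
     else - Q)"

definition S1 :: "real^'n^'n \<Rightarrow> real^'m^'n \<Rightarrow> real^'n^'n \<Rightarrow> real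
    \<Rightarrow> (real^'n \<Rightarrow> ereal) \<Rightarrow> (real^'n \<Rightarrow> ereal)" where
  "S1 A B Phi \<gamma> \<phi> x = (SUP w::real^'m.
      ereal (1/2 * (x \<bullet> (Phi *v x)) - \<gamma>\<^sup>2 / 2 * (norm w)\<^sup>2) + \<phi> (A *v x + B *v w))"

definition Sk :: "real^'n^'n \<Rightarrow> real^'m^'n \<Rightarrow> real^'n^'n \<Rightarrow> real
    \<Rightarrow> nat \<Rightarrow> (real^'n \<Rightarrow> ereal) \<Rightarrow> (real^'n \<Rightarrow> ereal)" where
  "Sk A B Phi \<gamma> k = (S1 A B Phi \<gamma> ^^ k)"

definition psi :: "real^'n^'n \<Rightarrow> nat \<Rightarrow> real^'n \<Rightarrow> real^'n \<Rightarrow> ereal" where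
  "psi M i x z =
    (if i = 1 then ereal (z \<bullet> x)
     else if i = 2 then ereal (- (1/2) * ((x - z) \<bullet> (M *v (x - z))))
     else (if x = z then 0 else - \<infinity>))"

definition Ski :: "real^'n^'n \<Rightarrow> real^'m^'n \<Rightarrow> real^'n^'n \<Rightarrow> real \<Rightarrow> real^'n^'n
    \<Rightarrow> nat \<Rightarrow> nat \<Rightarrow> real^'n \<Rightarrow> real^'n \<Rightarrow> ereal" where
  "Ski A B Phi \<gamma> M k i x z = Sk A B Phi \<gamma> k (\<lambda>x'. psi M i x' z) x"

definition Bki :: "real^'n^'n \<Rightarrow> real^'m^'n \<Rightarrow> real^'n^'n \<Rightarrow> real \<Rightarrow> real^'n^'n
    \<Rightarrow> nat \<Rightarrow> nat \<Rightarrow> real^'n \<Rightarrow> real^'n \<Rightarrow> ereal" where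
  "Bki A B Phi \<gamma> M k i y z = - (SUP x::real^'n. psi M i x y - Ski A B Phi \<gamma> M k i x z)"

end

theory Submission
  imports Defs
begin

text \<open>For \<open>i = 1, 2\<close> the basis function is the quadratic kernel
  \<open>x \<bullet> N y - x \<bullet> L x / 2 - y \<bullet> L y / 2\<close> (with \<open>N = 1, L = 0\<close>, resp. \<open>N = L = M\<close>), so
  \<open>-B\<^sub>k\<^sub>,\<^sub>i(y, z)\<close> is the supremum over \<open>x\<close> of a concave quadratic with Hessian \<open>-(Q\<^sup>1\<^sup>1 + L)\<close>.
  Finiteness of this supremum forces \<open>Q\<^sup>1\<^sup>1 + L > 0\<close>, and completing the square identifies
  the quadratic form of \<open>\<Theta>\<close>, hence \<open>\<Theta> = \<Gamma>\<^sup>i(Q)\<close> since a symmetric matrix is determined by its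
  quadratic form. For \<open>i = 3\<close> the supremum is attained at \<open>x = y\<close>, giving \<open>\<Theta> = -Q\<close>.
  The identity \<open>Q = \<Gamma>\<^sup>i(\<Theta>)\<close> is then the involutivity of \<open>\<Gamma>\<^sup>i\<close>.\<close>

lemma matrix_mul_matrix_inv:
  fixes A :: "real^'n^'n"
  assumes "invertible A"
  shows "A ** matrix_inv A = mat 1" "matrix_inv A ** A = mat 1"
proof -
  have "\<exists>A'. A ** A' = mat 1 \<and> A' ** A = mat 1"
    using assms unfolding invertible_def by blast
  then have "A ** matrix_inv A = mat 1 \<and> matrix_inv A ** A = mat 1"
    unfolding matrix_inv_def by (rule someI_ex)
  then show "A ** matrix_inv A = mat 1" "matrix_inv A ** A = mat 1" by auto
qed

lemma matrix_inv_unique: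
  fixes A B :: "real^'n^'n"
  assumes "B ** A = mat 1"
  shows "matrix_inv A = B"
proof -
  have "invertible A" using assms invertible_left_inverse by blast
  have "matrix_inv A = (B ** A) ** matrix_inv A" using assms by simp
  also have "\<dots> = B ** (A ** matrix_inv A)" by (simp add: matrix_mul_assoc)
  also have "\<dots> = B" by (simp add: matrix_mul_matrix_inv[OF \<open>invertible A\<close>])
  finally show ?thesis .
qed

lemma inner_matrix_vector_transpose:
  fixes A :: "real^'n^'m"
  shows "(A *v x) \<bullet> y = x \<bullet> (transpose A *v y)"
  by (metis dot_lmul_matrix inner_commute transpose_matrix_vector)

lemma symmetric_matrix_inv:
  fixes P :: "real^'n^'n"
  assumes "invertible P" "transpose P = P"
  shows "transpose (matrix_inv P) = matrix_inv P"
proof -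
  have "transpose (matrix_inv P) ** P = transpose (P ** matrix_inv P)"
    by (simp add: matrix_transpose_mul assms(2))
  also have "\<dots> = mat 1" by (simp add: matrix_mul_matrix_inv(1)[OF assms(1)])
  finally have "matrix_inv P = transpose (matrix_inv P)" by (rule matrix_inv_unique)
  then show ?thesis by simp
qed

lemma pos_def_mat_invertible:
  fixes P :: "real^'n^'n"
  assumes "pos_def_mat P"
  shows "invertible P"
proof -
  have "\<forall>x. P *v x = 0 \<longrightarrow> x = 0"
    using assms unfolding pos_def_mat_def by (metis inner_zero_right less_irrefl)
  then show ?thesis by (simp add: invertible_left_inverse matrix_left_invertible_ker)
qed

lemma matrix_vector_mult_uminus:
  fixes A :: "real^'n^'m"
  shows "(- A) *v x = - (A *v x)" "A *v (- x) = - (A *v x)"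
  by (simp_all add: vec_eq_iff matrix_vector_mult_def sum_negf)

lemma transpose_uminus: "transpose (- A) = - transpose (A::real^'n^'m)"
  and transpose_add: "transpose (A + B) = transpose A + transpose (B::real^'n^'m)"
  and transpose_diff: "transpose (A - B) = transpose A - transpose (B::real^'n^'m)"
  by (simp_all add: vec_eq_iff transpose_def)

lemmas matrix_vector_inner_simps = matrix_vector_mul_assoc[symmetric] matrix_vector_mult_uminus
  matrix_vector_mult_diff_distrib matrix_vector_mult_diff_rdistrib matrix_vector_right_distrib
  matrix_vector_mult_add_rdistrib inner_diff_left inner_diff_right inner_add_left inner_add_right

lemma symmetric_matrix_eqI_quadratic_form:
  fixes P P' :: "real^'k^'k"
  assumes "transpose P = P" "transpose P' = P'" "\<And>v. v \<bullet> (P *v v) = v \<bullet> (P' *v v)"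
  shows "P = P'"
proof -
  define D where "D = P - P'"
  have D_sym: "x \<bullet> (D *v y) = y \<bullet> (D *v x)" for x y
    using assms by (metis D_def inner_commute inner_matrix_vector_transpose transpose_diff)
  have D_form: "v \<bullet> (D *v v) = 0" for v
    using assms(3)[of v] by (simp add: D_def matrix_vector_mult_diff_rdistrib inner_diff_right)
  \<comment> \<open>polarization\<close>
  have "x \<bullet> (D *v y) = 0" for x y
    using D_form[of "x + y"] D_form[of x] D_form[of y] D_sym[of x y]
    by (simp add: matrix_vector_right_distrib inner_add_left inner_add_right)
  then have "D *v y = 0" for y by (metis inner_eq_zero_iff)
  then show ?thesis by (simp add: D_def matrix_eq matrix_vector_mult_diff_rdistrib)
qed

lemma SUP_concave_quadratic:
  fixes P :: "real^'n^'n"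
  assumes "pos_def_mat P"
  shows "(SUP x. ereal (b \<bullet> x - 1/2 * (x \<bullet> (P *v x)) - c))
    = ereal (1/2 * (b \<bullet> (matrix_inv P *v b)) - c)"
proof -
  have P_sym: "transpose P = P" and P_pos: "u \<noteq> 0 \<Longrightarrow> u \<bullet> (P *v u) > 0" for u
    using assms unfolding pos_def_mat_def by auto
  have PR: "P *v (matrix_inv P *v v) = v" for v
    using matrix_mul_matrix_inv(1)[OF pos_def_mat_invertible[OF assms]]
    by (simp add: matrix_vector_mul_assoc)
  define x0 where "x0 = matrix_inv P *v b"
  have P_swap: "u \<bullet> (P *v w) = w \<bullet> (P *v u)" for u w
    by (metis P_sym inner_commute inner_matrix_vector_transpose)
  \<comment> \<open>completing the square around the maximiser \<open>x0\<close>\<close>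
  have square: "b \<bullet> x - 1/2 * (x \<bullet> (P *v x)) - c
      = 1/2 * (b \<bullet> x0) - c - 1/2 * ((x - x0) \<bullet> (P *v (x - x0)))" for x
    using P_swap[of x0 x]
    by (simp add: x0_def PR matrix_vector_mult_diff_distrib inner_diff_left inner_diff_right
        inner_commute algebra_simps)
  show ?thesis
    unfolding x0_def[symmetric]
  proof (rule SUP_eqI)
    fix x :: "real^'n"
    have "0 \<le> (x - x0) \<bullet> (P *v (x - x0))"
      using P_pos[of "x - x0"] by (cases "x = x0") auto
    then show "ereal (b \<bullet> x - 1/2 * (x \<bullet> (P *v x)) - c) \<le> ereal (1/2 * (b \<bullet> x0) - c)"
      using square[of x] by simp
  next
    fix y assume "\<And>x. x \<in> UNIV \<Longrightarrow> ereal (b \<bullet> x - 1/2 * (x \<bullet> (P *v x)) - c) \<le> y"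
    then have "ereal (b \<bullet> x0 - 1/2 * (x0 \<bullet> (P *v x0)) - c) \<le> y" by blast
    then show "ereal (1/2 * (b \<bullet> x0) - c) \<le> y"
      using square[of x0] by simp
  qed
qed

lemma pos_def_mat_if_bounded_above:
  fixes P :: "real^'n^'n"
  assumes "transpose P = P" and "\<And>v t. t * (v \<bullet> v) - t\<^sup>2 * (v \<bullet> (P *v v)) / 2 \<le> C v"
  shows "pos_def_mat P"
  unfolding pos_def_mat_def
proof (intro conjI allI impI assms(1))
  fix v :: "real^'n" assume "v \<noteq> 0"
  show "v \<bullet> (P *v v) > 0"
  proof (rule ccontr)
    define t where "t = (\<bar>C v\<bar> + 1) / (v \<bullet> v)"
    assume "\<not> ?thesis"
    then have "t\<^sup>2 * (v \<bullet> (P *v v)) / 2 \<le> 0"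
      by (simp add: mult_nonneg_nonpos divide_nonpos_pos)
    moreover have "t * (v \<bullet> v) = \<bar>C v\<bar> + 1"
      using \<open>v \<noteq> 0\<close> by (simp add: t_def)
    ultimately show False
      using assms(2)[of t v] by linarith
  qed
qed

lemma stack_cases: obtains y z where "v = stack y z"
proof
  show "v = stack (\<chi> j. v $ Inl j) (\<chi> j. v $ Inr j)"
    by (simp add: stack_def vec_eq_iff split: sum.split)
qed

lemma sum_UNIV_Plus:
  "sum f (UNIV :: ('a::finite + 'b::finite) set) = (\<Sum>i\<in>UNIV. f (Inl i)) + (\<Sum>j\<in>UNIV. f (Inr j))"
  using sum.Plus[of "UNIV::'a set" "UNIV::'b set" f] by (simp add: comp_def)

lemma inner_stack: "stack a b \<bullet> stack c d = a \<bullet> c + b \<bullet> d"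
  by (simp add: inner_vec_def sum_UNIV_Plus stack_def)

lemma matrix_vector_mult_stack:
  "Q *v stack x z = stack (blk11 Q *v x + blk12 Q *v z) (blk21 Q *v x + blk22 Q *v z)"
  by (simp add: vec_eq_iff matrix_vector_mult_def stack_def blk11_def blk12_def blk21_def blk22_def
      sum_UNIV_Plus split: sum.split)

lemma quadratic_form_stack:
  "stack x z \<bullet> (Q *v stack x z) =
    x \<bullet> (blk11 Q *v x) + x \<bullet> (blk12 Q *v z) + z \<bullet> (blk21 Q *v x) + z \<bullet> (blk22 Q *v z)"
  by (simp add: matrix_vector_mult_stack inner_stack inner_add_right)

lemma blk_blockmat [simp]:
  "blk11 (blockmat a b c d) = a" "blk12 (blockmat a b c d) = b"
  "blk21 (blockmat a b c d) = c" "blk22 (blockmat a b c d) = d"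
  by (simp_all add: vec_eq_iff blk11_def blk12_def blk21_def blk22_def blockmat_def)

lemma blockmat_blk: "blockmat (blk11 Q) (blk12 Q) (blk21 Q) (blk22 Q) = Q"
  by (simp add: vec_eq_iff blk11_def blk12_def blk21_def blk22_def blockmat_def split: sum.split)

lemma transpose_blockmat:
  "transpose (blockmat a b c d) = blockmat (transpose a) (transpose c) (transpose b) (transpose d)"
  by (simp add: vec_eq_iff transpose_def blockmat_def split: sum.split)

lemma transpose_blk:
  assumes "transpose Q = Q"
  shows "transpose (blk11 Q) = blk11 Q" "transpose (blk22 Q) = blk22 Q"
    "transpose (blk12 Q) = blk21 Q" "transpose (blk21 Q) = blk12 Q"
  using assms by (simp_all add: vec_eq_iff transpose_def blk11_def blk12_def blk21_def blk22_def)

text \<open>The coefficient matrix of the max-plus dual of the quadratic kernel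
  \<open>x \<bullet> (N *v y) - x \<bullet> (L *v x) / 2 - y \<bullet> (L *v y) / 2\<close>;
  \<open>\<Gamma>\<^sup>1\<close> and \<open>\<Gamma>\<^sup>2\<close> are the cases \<open>N = 1, L = 0\<close> and \<open>N = L = M\<close>.\<close>
definition dual_mat :: "real^'n^'n \<Rightarrow> real^'n^'n \<Rightarrow> real^('n+'n)^('n+'n) \<Rightarrow> real^('n+'n)^('n+'n)"
  where "dual_mat N L Q =
    (let R = matrix_inv (blk11 Q + L)
     in blockmat (N ** R ** N - L) (- (N ** R ** blk12 Q)) (- (blk21 Q ** R ** N))
          (blk21 Q ** R ** blk12 Q - blk22 Q))"

lemma Gamma_1_eq_dual_mat: "Gamma M 1 Q = dual_mat (mat 1) 0 Q"
  by (simp add: Gamma_def dual_mat_def Let_def)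

lemma Gamma_2_eq_dual_mat: "Gamma M 2 Q = dual_mat M M Q"
  by (simp add: Gamma_def dual_mat_def Let_def)

lemma symmetric_dual_mat:
  assumes "transpose N = N" "transpose L = L" "transpose Q = Q" "invertible (blk11 Q + L)"
  shows "transpose (dual_mat N L Q) = dual_mat N L Q"
proof -
  have "transpose (matrix_inv (blk11 Q + L)) = matrix_inv (blk11 Q + L)"
    using assms by (simp add: symmetric_matrix_inv transpose_add transpose_blk)
  then show ?thesis
    using assms by (simp add: dual_mat_def Let_def transpose_blockmat transpose_uminus transpose_diff
        matrix_transpose_mul transpose_blk matrix_mul_assoc)
qed

lemma quadratic_form_dual_mat:
  assumes "transpose N = N" "transpose L = L" "transpose Q = Q" "invertible (blk11 Q + L)"
  defines "R \<equiv> matrix_inv (blk11 Q + L)"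
  shows "stack y z \<bullet> (dual_mat N L Q *v stack y z)
    = (N *v y - blk12 Q *v z) \<bullet> (R *v (N *v y - blk12 Q *v z)) - y \<bullet> (L *v y) - z \<bullet> (blk22 Q *v z)"
proof -
  have "transpose R = R"
    using assms by (simp add: symmetric_matrix_inv transpose_add transpose_blk)
  then show ?thesis
    using assms unfolding dual_mat_def Let_def quadratic_form_stack blk_blockmat R_def[symmetric]
    by (simp add: matrix_vector_inner_simps inner_matrix_vector_transpose transpose_blk)
qed

lemma dual_mat_involutive:
  assumes "invertible N" "invertible (blk11 Q + L)"
  shows "dual_mat N L (dual_mat N L Q) = Q"
proof -
  define P where "P = blk11 Q + L"
  define R where "R = matrix_inv P"
  define S where "S = matrix_inv N ** P ** matrix_inv N"
  have PR: "P *v (R *v v) = v" "R *v (P *v v) = v" for v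
    using matrix_mul_matrix_inv[OF assms(2)] by (simp_all add: P_def R_def matrix_vector_mul_assoc)
  have NN: "N *v (matrix_inv N *v v) = v" "matrix_inv N *v (N *v v) = v" for v
    using matrix_mul_matrix_inv[OF assms(1)] by (simp_all add: matrix_vector_mul_assoc)
  \<comment> \<open>the top-left block of the dual, shifted by \<open>L\<close>, is \<open>N R N\<close>\<close>
  have inv_NRN: "matrix_inv (N ** R ** N) = S"
    by (rule matrix_inv_unique) (simp add: S_def matrix_eq matrix_vector_inner_simps PR NN)
  have "dual_mat N L (dual_mat N L Q)
      = blockmat (N ** S ** N - L) (- (N ** S ** - (N ** R ** blk12 Q)))
          (- (- (blk21 Q ** R ** N) ** S ** N))
          (- (blk21 Q ** R ** N) ** S ** - (N ** R ** blk12 Q) - (blk21 Q ** R ** blk12 Q - blk22 Q))"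
    unfolding dual_mat_def[of N L Q] Let_def P_def[symmetric] R_def[symmetric]
    by (simp add: dual_mat_def Let_def inv_NRN)
  also have "\<dots> = blockmat (blk11 Q) (blk12 Q) (blk21 Q) (blk22 Q)"
  proof -
    have "N ** S ** N - L = blk11 Q"
      by (simp add: S_def matrix_eq matrix_vector_inner_simps NN P_def)
    moreover have "- (N ** S ** - (N ** R ** blk12 Q)) = blk12 Q"
      by (simp add: S_def matrix_eq matrix_vector_inner_simps PR NN)
    moreover have "- (- (blk21 Q ** R ** N) ** S ** N) = blk21 Q"
      by (simp add: S_def matrix_eq matrix_vector_inner_simps PR NN)
    moreover have "- (blk21 Q ** R ** N) ** S ** - (N ** R ** blk12 Q)
        - (blk21 Q ** R ** blk12 Q - blk22 Q) = blk22 Q"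
      by (simp add: S_def matrix_eq matrix_vector_inner_simps PR NN)
    ultimately show ?thesis by simp
  qed
  finally show ?thesis by (simp only: blockmat_blk)
qed

lemma dual_mat_if_max_plus_dual:
  fixes N L :: "real^'n^'n" and Q \<Theta> :: "real^('n+'n)^('n+'n)"
    and \<psi> :: "real^'n \<Rightarrow> real^'n \<Rightarrow> ereal"
  assumes N_sym: "transpose N = N" and N_inv: "invertible N" and L_sym: "transpose L = L"
    and Q_sym: "transpose Q = Q" and \<Theta>_sym: "transpose \<Theta> = \<Theta>"
    and kernel: "\<And>x y. \<psi> x y = ereal (x \<bullet> (N *v y) - 1/2 * (x \<bullet> (L *v x)) - 1/2 * (y \<bullet> (L *v y)))"
    and max_plus_dual: "\<And>y z. (SUP x. \<psi> x y - ereal (1/2 * (stack x z \<bullet> (Q *v stack x z))))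
                 = ereal (1/2 * (stack y z \<bullet> (\<Theta> *v stack y z)))"
  shows "\<Theta> = dual_mat N L Q \<and> Q = dual_mat N L \<Theta>"
proof -
  have dual: "(SUP x. ereal (x \<bullet> (N *v y) - 1/2 * (x \<bullet> (L *v x)) - 1/2 * (y \<bullet> (L *v y))
                   - 1/2 * (stack x z \<bullet> (Q *v stack x z))))
                 = ereal (1/2 * (stack y z \<bullet> (\<Theta> *v stack y z)))" for y z
    using max_plus_dual[of y z] by (simp add: kernel)
  define P where "P = blk11 Q + L"
  have P_sym: "transpose P = P"
    by (simp add: P_def transpose_add transpose_blk[OF Q_sym] L_sym)
  have expand: "x \<bullet> (N *v y) - 1/2 * (x \<bullet> (L *v x)) - 1/2 * (y \<bullet> (L *v y))
        - 1/2 * (stack x z \<bullet> (Q *v stack x z))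
      = (N *v y - blk12 Q *v z) \<bullet> x - 1/2 * (x \<bullet> (P *v x))
        - (1/2 * (y \<bullet> (L *v y)) + 1/2 * (z \<bullet> (blk22 Q *v z)))" for x y z
  proof -
    have "x \<bullet> (blk12 Q *v z) = z \<bullet> (blk21 Q *v x)"
      by (metis inner_commute inner_matrix_vector_transpose transpose_blk(3)[OF Q_sym])
    then show ?thesis
      by (simp add: quadratic_form_stack P_def matrix_vector_mult_add_rdistrib inner_diff_left
          inner_add_right inner_commute algebra_simps)
  qed
  have P_pos: "pos_def_mat P"
  proof (rule pos_def_mat_if_bounded_above[OF P_sym])
    fix v :: "real^'n" and t :: real
    define y where "y = matrix_inv N *v v"
    have Ny: "N *v y = v"
      using matrix_mul_matrix_inv(1)[OF N_inv] by (simp add: y_def matrix_vector_mul_assoc)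
    have "ereal ((N *v y - blk12 Q *v 0) \<bullet> (t *\<^sub>R v) - 1/2 * ((t *\<^sub>R v) \<bullet> (P *v (t *\<^sub>R v)))
        - (1/2 * (y \<bullet> (L *v y)) + 1/2 * (0 \<bullet> (blk22 Q *v 0))))
      \<le> ereal (1/2 * (stack y 0 \<bullet> (\<Theta> *v stack y 0)))"
      unfolding dual[symmetric] expand[symmetric] by (rule SUP_upper) simp
    then show "t * (v \<bullet> v) - t\<^sup>2 * (v \<bullet> (P *v v)) / 2
        \<le> 1/2 * (stack y 0 \<bullet> (\<Theta> *v stack y 0)) + 1/2 * (y \<bullet> (L *v y))"
      by (simp add: Ny matrix_vector_mult_scaleR power2_eq_square algebra_simps)
  qed
  have P_inv: "invertible P" by (rule pos_def_mat_invertible[OF P_pos])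
  have \<Theta>_eq: "\<Theta> = dual_mat N L Q"
  proof (rule symmetric_matrix_eqI_quadratic_form[OF \<Theta>_sym])
    show "transpose (dual_mat N L Q) = dual_mat N L Q"
      using symmetric_dual_mat N_sym L_sym Q_sym P_inv by (simp add: P_def)
    fix v :: "real^('n+'n)"
    obtain y z where v: "v = stack y z" by (rule stack_cases)
    have "ereal (1/2 * (stack y z \<bullet> (\<Theta> *v stack y z)))
        = ereal (1/2 * ((N *v y - blk12 Q *v z) \<bullet> (matrix_inv P *v (N *v y - blk12 Q *v z)))
            - (1/2 * (y \<bullet> (L *v y)) + 1/2 * (z \<bullet> (blk22 Q *v z))))"
      unfolding dual[symmetric] expand by (rule SUP_concave_quadratic[OF P_pos])
    then show "v \<bullet> (\<Theta> *v v) = v \<bullet> (dual_mat N L Q *v v)"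
      using quadratic_form_dual_mat[OF N_sym L_sym Q_sym] P_inv by (simp add: v P_def)
  qed
  then show ?thesis
    using dual_mat_involutive[OF N_inv] P_inv by (simp add: P_def)
qed

lemma neg_if_max_plus_dual_delta:
  fixes Q \<Theta> :: "real^('n::finite+'n)^('n+'n)"
  assumes Q_sym: "transpose Q = Q" and \<Theta>_sym: "transpose \<Theta> = \<Theta>"
    and dual: "\<And>y z. (SUP x. (if x = y then 0 else - \<infinity>) - ereal (1/2 * (stack x z \<bullet> (Q *v stack x z))))
                 = ereal (1/2 * (stack y z \<bullet> (\<Theta> *v stack y z)))"
  shows "\<Theta> = - Q"
proof (rule symmetric_matrix_eqI_quadratic_form[OF \<Theta>_sym])
  have SUP_delta: "(SUP x. (if x = y then 0 else - \<infinity>) - ereal (f x)) = ereal (- f y)"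
    for y :: "real^'n" and f :: "real^'n \<Rightarrow> real"
  proof (rule SUP_eqI)
    fix u assume "\<And>x. x \<in> UNIV \<Longrightarrow> (if x = y then 0 else - \<infinity>) - ereal (f x) \<le> u"
    then have "(if y = y then 0 else - \<infinity>) - ereal (f y) \<le> u" by blast
    then show "ereal (- f y) \<le> u" by (simp add: zero_ereal_def)
  qed auto
  show "transpose (- Q) = - Q" by (simp add: transpose_uminus Q_sym)
  fix v :: "real^('n+'n)"
  obtain y z where v: "v = stack y z" by (rule stack_cases)
  show "v \<bullet> (\<Theta> *v v) = v \<bullet> (- Q *v v)"
    using dual[of y z] by (simp add: v SUP_delta matrix_vector_mult_uminus)
qed

lemma invertible_mat_1: "invertible (mat 1 :: real^'n^'n)"
  by (auto simp: invertible_def)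

lemma transpose_zero: "transpose (0 :: real^'n^'m) = 0"
  by (simp add: transpose_def vec_eq_iff)

lemma psi_1_eq: "psi M 1 x y = ereal (x \<bullet> (mat 1 *v y) - 1/2 * (x \<bullet> (0 *v x)) - 1/2 * (y \<bullet> (0 *v y)))"
  by (simp add: psi_def inner_commute)

lemma psi_2_eq:
  assumes "transpose M = M"
  shows "psi M 2 x y = ereal (x \<bullet> (M *v y) - 1/2 * (x \<bullet> (M *v x)) - 1/2 * (y \<bullet> (M *v y)))"
  using inner_matrix_vector_transpose[of M y x] assms
  by (simp add: psi_def matrix_vector_inner_simps inner_commute algebra_simps)

lemma psi_3_eq: "psi M 3 x y = (if x = y then 0 else - \<infinity>)"
  by (simp add: psi_def)

theorem theorem3p5:
  fixes A :: "real^'n^'n" and B :: "real^'m^'n" and Phi :: "real^'n^'n" and \<gamma> :: real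
    and M :: "real^'n^'n" and k i :: nat
    and Q \<Theta> :: "real^('n+'n)^('n+'n)"
  assumes M: "pos_def_mat M"
    and k: "k > 0" and i: "i \<in> {1, 2, 3}"
    and Qsym: "transpose Q = Q" and Tsym: "transpose \<Theta> = \<Theta>"
    and SQ: "\<forall>x z. Ski A B Phi \<gamma> M k i x z = ereal (1/2 * (stack x z \<bullet> (Q *v stack x z)))"
    and BT: "\<forall>y z. Bki A B Phi \<gamma> M k i y z = ereal (- (1/2) * (stack y z \<bullet> (\<Theta> *v stack y z)))"
  shows "\<Theta> = Gamma M i Q \<and> Q = Gamma M i \<Theta>"
proof -
  have dual: "(SUP x. psi M i x y - ereal (1/2 * (stack x z \<bullet> (Q *v stack x z))))
      = ereal (1/2 * (stack y z \<bullet> (\<Theta> *v stack y z)))" for y z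
    using BT SQ by (simp add: Bki_def ereal_uminus_eq_reorder)
  have M_sym: "transpose M = M" and M_inv: "invertible M"
    using M pos_def_mat_invertible unfolding pos_def_mat_def by auto
  from i consider "i = 1" | "i = 2" | "i = 3" by blast
  then show ?thesis
  proof cases
    case 1
    show ?thesis
      unfolding 1 Gamma_1_eq_dual_mat
      using transpose_mat invertible_mat_1 transpose_zero Qsym Tsym psi_1_eq dual[unfolded 1]
      by (rule dual_mat_if_max_plus_dual)
  next
    case 2
    show ?thesis
      unfolding 2 Gamma_2_eq_dual_mat
      using M_sym M_inv M_sym Qsym Tsym psi_2_eq[OF M_sym] dual[unfolded 2]
      by (rule dual_mat_if_max_plus_dual)
  next
    case 3
    have "\<Theta> = - Q"
      using Qsym Tsym dual[unfolded 3 psi_3_eq] by (rule neg_if_max_plus_dual_delta)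
    then show ?thesis by (simp add: 3 Gamma_def)
  qed
qed

end
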